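(* Let $\mathcal A=(S,R_0)$ be an argumentation network with joint attacks, where $S\neq\varnothing$ and $R_0\subseteq(2^S\setminus\{\varnothing\})\times S$. Then there exists a legitimate Caminada–Gabbay labelling $\lambda$ of $\mathcal A$ (i.e. $\mathcal A$ has complete extensions).
   Context: A legitimate Caminada–Gabbay labelling of $(S,R_0)$ is $\lambda:S\to\{\mathrm{in},\mathrm{out},\mathrm{und}\}$ such that for each $x\in S$: (CG1) $\lambda(x)=\mathrm{in}$ iff either $x$ is attacked by no $G$, or for every $G$ with $GR_0x$ there is $y\in G$ with $\lambda(y)=\mathrm{out}$; (CG2) $\lambda(x)=\mathrm{out}$ iff for some $G$ with $GR_0x$, all $y\in G$ have $\lambda(y)=\mathrm{in}$; (CG3) $\lambda(x)=\mathrm{und}$ iff for every $G$ with $GR_0x$ there is $y\in G$ with $\lambda(y)\neq\mathrm{in}$, and for some $G'$ with $G'R_0x$ every $y\in G'$ has $\lambda(y)\in\{\mathrm{in},\mathrm{und}\}$. Complete extensions are identified with legitimate Caminada–Gabbay labellings. *)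

theory Defs
  imports Main
begin

datatype label = In | Out | Und

definition joint_attack_network :: "'a set \<Rightarrow> ('a set \<times> 'a) set \<Rightarrow> bool" where
  "joint_attack_network S R0 \<longleftrightarrow>
     S \<noteq> {} \<and> (\<forall>(G, x) \<in> R0. G \<subseteq> S \<and> G \<noteq> {} \<and> x \<in> S)"

definition legitimate_CG_labelling ::
  "'a set \<Rightarrow> ('a set \<times> 'a) set \<Rightarrow> ('a \<Rightarrow> label) \<Rightarrow> bool" where
  "legitimate_CG_labelling S R0 lab \<longleftrightarrow>
     (\<forall>x\<in>S.
        (lab x = In \<longleftrightarrow>
           ((\<forall>G. (G, x) \<notin> R0) \<or> (\<forall>G. (G, x) \<in> R0 \<longrightarrow> (\<exists>y\<in>G. lab y = Out)))) \<and>
        (lab x = Out \<longleftrightarrow> (\<exists>G. (G, x) \<in> R0 \<and> (\<forall>y\<in>G. lab y = In))) \<and>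
        (lab x = Und \<longleftrightarrow>
           ((\<forall>G. (G, x) \<in> R0 \<longrightarrow> (\<exists>y\<in>G. lab y \<noteq> In)) \<and>
            (\<exists>G'. (G', x) \<in> R0 \<and> (\<forall>y\<in>G'. lab y \<in> {In, Und})))))"

end

theory Submission imports Defs begin

text \<open>The grounded labelling: take the least fixpoint of the monotone operator that labels
  \<open>x\<close> in when every attacking group contains an out-argument, and out when some attacking
  group is entirely in; everything else is undecided. Induction over the fixpoint shows that no
  argument is labelled both in and out, and the fixpoint equations are then exactly (CG1)-(CG3).\<close>

text \<open>A partial labelling is encoded as a set of pairs: \<open>(x, True)\<close> for in, \<open>(x, False)\<close> for out.\<close>

definition grounded_step :: "('a set \<times> 'a) set \<Rightarrow> ('a \<times> bool) set \<Rightarrow> ('a \<times> bool) set" where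
  "grounded_step R0 X =
     {(x, True) | x. \<forall>G. (G, x) \<in> R0 \<longrightarrow> (\<exists>y\<in>G. (y, False) \<in> X)} \<union>
     {(x, False) | x. \<exists>G. (G, x) \<in> R0 \<and> (\<forall>y\<in>G. (y, True) \<in> X)}"

lemma mono_grounded_step: "mono (grounded_step R0)"
  unfolding mono_def grounded_step_def by blast

definition grounded :: "('a set \<times> 'a) set \<Rightarrow> ('a \<times> bool) set" where
  "grounded R0 = lfp (grounded_step R0)"

lemma grounded_unfold: "grounded R0 = grounded_step R0 (grounded R0)"
  unfolding grounded_def by (rule lfp_unfold[OF mono_grounded_step])

lemma in_grounded_iff:
  "(x, True) \<in> grounded R0 \<longleftrightarrow> (\<forall>G. (G, x) \<in> R0 \<longrightarrow> (\<exists>y\<in>G. (y, False) \<in> grounded R0))"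
  by (subst grounded_unfold) (auto simp: grounded_step_def)

lemma out_grounded_iff:
  "(x, False) \<in> grounded R0 \<longleftrightarrow> (\<exists>G. (G, x) \<in> R0 \<and> (\<forall>y\<in>G. (y, True) \<in> grounded R0))"
  by (subst grounded_unfold) (auto simp: grounded_step_def)

lemma grounded_consistent:
  assumes "(x, True) \<in> grounded R0"
  shows "(x, False) \<notin> grounded R0"
proof -
  let ?L = "grounded R0"
  let ?P = "{(y, b). (y, \<not> b) \<notin> ?L}"
  have "grounded_step R0 (?L \<inter> ?P) \<subseteq> ?P"
  proof
    fix p assume p: "p \<in> grounded_step R0 (?L \<inter> ?P)"
    show "p \<in> ?P"
    proof (cases p)
      case (Pair y b)
      show ?thesis
      proof (cases b)
        case True
        then have "\<forall>G. (G, y) \<in> R0 \<longrightarrow> (\<exists>z\<in>G. (z, False) \<in> ?L \<and> (z, True) \<notin> ?L)"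
          using p Pair by (auto simp: grounded_step_def)
        then have "(y, False) \<notin> ?L"
          by (meson out_grounded_iff)
        then show ?thesis using Pair True by simp
      next
        case False
        then obtain G where "(G, y) \<in> R0" "\<forall>z\<in>G. (z, True) \<in> ?L \<and> (z, False) \<notin> ?L"
          using p Pair by (auto simp: grounded_step_def)
        then have "(y, True) \<notin> ?L"
          by (meson in_grounded_iff)
        then show ?thesis using Pair False by simp
      qed
    qed
  qed
  then have "?L \<subseteq> ?P"
    unfolding grounded_def by (rule lfp_induct[OF mono_grounded_step])
  with assms show ?thesis by auto
qed

definition grounded_labelling :: "('a set \<times> 'a) set \<Rightarrow> 'a \<Rightarrow> label" where
  "grounded_labelling R0 x =
     (if (x, True) \<in> grounded R0 then In else if (x, False) \<in> grounded R0 then Out else Und)"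

lemma grounded_labelling_In_iff: "grounded_labelling R0 x = In \<longleftrightarrow> (x, True) \<in> grounded R0"
  by (simp add: grounded_labelling_def)

lemma grounded_labelling_Out_iff: "grounded_labelling R0 x = Out \<longleftrightarrow> (x, False) \<in> grounded R0"
  using grounded_consistent[of x R0] by (auto simp: grounded_labelling_def)

lemma legitimate_CG_labelling_grounded: "legitimate_CG_labelling S R0 (grounded_labelling R0)"
proof -
  let ?lab = "grounded_labelling R0"
  have Und_iff: "?lab x = Und \<longleftrightarrow> ?lab x \<noteq> In \<and> ?lab x \<noteq> Out" for x
    by (cases "?lab x") auto
  have not_Out_iff: "?lab x \<in> {In, Und} \<longleftrightarrow> ?lab x \<noteq> Out" for x
    by (cases "?lab x") auto
  show ?thesis
    unfolding legitimate_CG_labelling_def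
  proof (intro ballI conjI)
    fix x
    show "(?lab x = In) = ((\<forall>G. (G, x) \<notin> R0) \<or> (\<forall>G. (G, x) \<in> R0 \<longrightarrow> (\<exists>y\<in>G. ?lab y = Out)))"
      using in_grounded_iff[of x R0]
      by (auto simp: grounded_labelling_In_iff grounded_labelling_Out_iff)
    show "(?lab x = Out) = (\<exists>G. (G, x) \<in> R0 \<and> (\<forall>y\<in>G. ?lab y = In))"
      using out_grounded_iff[of x R0]
      by (auto simp: grounded_labelling_In_iff grounded_labelling_Out_iff)
    show "(?lab x = Und) = ((\<forall>G. (G, x) \<in> R0 \<longrightarrow> (\<exists>y\<in>G. ?lab y \<noteq> In)) \<and>
            (\<exists>G'. (G', x) \<in> R0 \<and> (\<forall>y\<in>G'. ?lab y \<in> {In, Und})))"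
      unfolding Und_iff not_Out_iff using in_grounded_iff[of x R0] out_grounded_iff[of x R0]
      by (auto simp: grounded_labelling_In_iff grounded_labelling_Out_iff)
  qed
qed

theorem theorem21:
  fixes S :: "'a set" and R0 :: "('a set \<times> 'a) set"
  assumes "joint_attack_network S R0"
  shows "\<exists>lab. legitimate_CG_labelling S R0 lab"
  using legitimate_CG_labelling_grounded by blast

end
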